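(* Let $M$ be a parabolic-retract-compatible Coxeter matrix over a finite set $S$ and $A_S$ its associated Artin group. Then for every $x\in S$ there exists an ordinary retraction $\varphi_x:A_S\to A_{S\setminus\{x\}}$.
   Context: A Coxeter matrix over a finite set $S$ is a matrix $M=(m_{s,t})_{s,t\in S}$ with entries in $\mathbb{N}\cup\{\infty\}$, $m_{s,s}=1$, and $m_{s,t}=m_{t,s}\ge 2$ for $s\neq t$. Write $\Pi(s,t,m)$ for the alternating word $sts\cdots$ of length $m$. The Artin group is $A_S=\langle S\mid \Pi(s,t,m_{s,t})=\Pi(t,s,m_{s,t})$ for $s\neq t$, $m_{s,t}\neq\infty\rangle$. For $X\subseteq S$, $A_X$ is the subgroup generated by $X$ ($A_\emptyset$ trivial) and $M_X$ the submatrix indexed by $X$. $M$ is retract-compatible if all its entries are finite odd numbers and for every triple $a,b,c\in S$ of pairwise distinct elements, up to permuting $a,b,c$, $m_{a,b}=m_{a,c}$ and $m_{b,c}$ divides $m_{a,b}$; a rank-$1$ Coxeter matrix is always retract-compatible. $M$ is parabolic-retract-compatible if there is a partition $S=T_1\sqcup\cdots\sqcup T_k$ such that (1) each $M_{T_i}$ is retract-compatible, and (2) for each $i\neq j$ there exists $n_{ij}$, either an even number or $\infty$, with $m_{a,b}=n_{ij}$ for all $(a,b)\in T_i\times T_j$. A retraction $\varphi:A_S\to A_X$ (homomorphism restricting to the identity on $A_X$) is ordinary if $\varphi(x)=x$ for all $x\in X$ and $\varphi(y)\in X\cup\{1\}$ for all $y\in S\setminus X$. *)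

theory Defs
  imports "HOL-Algebra.Generated_Groups" "HOL-Library.Extended_Nat"
begin

definition coxeter_matrix :: "'a set \<Rightarrow> ('a \<Rightarrow> 'a \<Rightarrow> enat) \<Rightarrow> bool" where
  "coxeter_matrix S M \<longleftrightarrow> finite S \<and> (\<forall>s\<in>S. M s s = 1) \<and>
     (\<forall>s\<in>S. \<forall>t\<in>S. s \<noteq> t \<longrightarrow> M s t = M t s \<and> M s t \<ge> 2)"

definition retract_compatible :: "'a set \<Rightarrow> ('a \<Rightarrow> 'a \<Rightarrow> enat) \<Rightarrow> bool" where
  "retract_compatible X M \<longleftrightarrow>
     (\<forall>a\<in>X. \<forall>b\<in>X. \<exists>n. M a b = enat n \<and> odd n) \<and>
     (\<forall>a\<in>X. \<forall>b\<in>X. \<forall>c\<in>X. a \<noteq> b \<and> a \<noteq> c \<and> b \<noteq> c \<longrightarrow>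
        (let P = (\<lambda>a b c. M a b = M a c \<and>
                     (\<exists>n k. M a b = enat n \<and> M b c = enat k \<and> k dvd n))
         in P a b c \<or> P b a c \<or> P c a b))"

definition parabolic_retract_compatible :: "'a set \<Rightarrow> ('a \<Rightarrow> 'a \<Rightarrow> enat) \<Rightarrow> bool" where
  "parabolic_retract_compatible S M \<longleftrightarrow>
     (\<exists>P. (\<Union>P = S) \<and> (\<forall>T\<in>P. T \<noteq> {}) \<and>
          (\<forall>T\<in>P. \<forall>T'\<in>P. T \<noteq> T' \<longrightarrow> T \<inter> T' = {}) \<and>
          (\<forall>T\<in>P. retract_compatible T M) \<and>
          (\<forall>T\<in>P. \<forall>T'\<in>P. T \<noteq> T' \<longrightarrow>
             (\<exists>n. (n = \<infinity> \<or> (\<exists>k. n = enat k \<and> even k)) \<and>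
                  (\<forall>a\<in>T. \<forall>b\<in>T'. M a b = n))))"

(* Words: letters (s, False) = s, (s, True) = s^{-1} *)
definition alt_word :: "'a \<Rightarrow> 'a \<Rightarrow> nat \<Rightarrow> ('a \<times> bool) list" where
  "alt_word s t m = map (\<lambda>i. (if even i then s else t, False)) [0..<m]"

inductive artin_rel :: "('a \<Rightarrow> 'a \<Rightarrow> enat) \<Rightarrow> 'a set \<Rightarrow> ('a \<times> bool) list \<Rightarrow> ('a \<times> bool) list \<Rightarrow> bool"
  for M S where
  refl: "w \<in> lists (S \<times> UNIV) \<Longrightarrow> artin_rel M S w w"
| sym: "artin_rel M S u v \<Longrightarrow> artin_rel M S v u"
| trans: "artin_rel M S u v \<Longrightarrow> artin_rel M S v w \<Longrightarrow> artin_rel M S u w"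
| cancel: "u \<in> lists (S \<times> UNIV) \<Longrightarrow> v \<in> lists (S \<times> UNIV) \<Longrightarrow> s \<in> S \<Longrightarrow>
     artin_rel M S (u @ [(s, b), (s, \<not> b)] @ v) (u @ v)"
| braid: "u \<in> lists (S \<times> UNIV) \<Longrightarrow> v \<in> lists (S \<times> UNIV) \<Longrightarrow> s \<in> S \<Longrightarrow> t \<in> S \<Longrightarrow>
     s \<noteq> t \<Longrightarrow> M s t = enat m \<Longrightarrow>
     artin_rel M S (u @ alt_word s t m @ v) (u @ alt_word t s m @ v)"

definition artin_group :: "('a \<Rightarrow> 'a \<Rightarrow> enat) \<Rightarrow> 'a set \<Rightarrow> ('a \<times> bool) list set monoid" where
  "artin_group M S =
     \<lparr> carrier = {{w. artin_rel M S u w} | u. u \<in> lists (S \<times> UNIV)},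
       mult = (\<lambda>A B. {w. \<exists>u\<in>A. \<exists>v\<in>B. artin_rel M S (u @ v) w}),
       one = {w. artin_rel M S [] w} \<rparr>"

definition artin_gen :: "('a \<Rightarrow> 'a \<Rightarrow> enat) \<Rightarrow> 'a set \<Rightarrow> 'a \<Rightarrow> ('a \<times> bool) list set" where
  "artin_gen M S s = {w. artin_rel M S [(s, False)] w}"

definition artin_parabolic :: "('a \<Rightarrow> 'a \<Rightarrow> enat) \<Rightarrow> 'a set \<Rightarrow> 'a set \<Rightarrow> ('a \<times> bool) list set set" where
  "artin_parabolic M S X = generate (artin_group M S) (artin_gen M S ` X)"

definition ordinary_retraction ::
  "('a \<Rightarrow> 'a \<Rightarrow> enat) \<Rightarrow> 'a set \<Rightarrow> 'a set \<Rightarrow> (('a \<times> bool) list set \<Rightarrow> ('a \<times> bool) list set) \<Rightarrow> bool" where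
  "ordinary_retraction M S X \<phi> \<longleftrightarrow>
     \<phi> \<in> hom (artin_group M S) ((artin_group M S)\<lparr>carrier := artin_parabolic M S X\<rparr>) \<and>
     (\<forall>g\<in>artin_parabolic M S X. \<phi> g = g) \<and>
     (\<forall>x\<in>X. \<phi> (artin_gen M S x) = artin_gen M S x) \<and>
     (\<forall>y\<in>S - X. \<phi> (artin_gen M S y) \<in> artin_gen M S ` X \<union> {\<one>\<^bsub>artin_group M S\<^esub>})"

end

theory Submission
  imports Defs
begin

(* Let x lie in the block T of the partition.  If T = {x}, every m_{x,t} with t \<noteq> x is even
   or \<infinity>, and deleting x respects every relation, since both sides of a braid relation
   of even length 2j between x and t become t^j.  Otherwise pick y \<in> T - {x} with m_{x,y}
   minimal.  Retract-compatibility of T, and the constancy of M between different blocks,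
   give m_{y,t} | m_{x,t} for all t \<noteq> x, y; hence renaming x to y respects every relation,
   because a braid relation of length m_{y,t} implies the one of any multiple length. *)

abbreviation words :: "'a set \<Rightarrow> ('a \<times> bool) list set" where
  "words S \<equiv> lists (S \<times> UNIV)"

lemma alt_word_in_words: "s \<in> S \<Longrightarrow> t \<in> S \<Longrightarrow> alt_word s t m \<in> words S"
  by (auto simp: alt_word_def)

lemma alt_word_0 [simp]: "alt_word s t 0 = []"
  by (simp add: alt_word_def)

lemma alt_word_Suc: "alt_word s t (Suc m) = alt_word s t m @ [(if even m then s else t, False)]"
  by (simp add: alt_word_def)

lemma alt_word_add:
  "alt_word s t (a + b) = alt_word s t a @ (if even a then alt_word s t b else alt_word t s b)"
  by (induction b) (auto simp: alt_word_Suc)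

lemma coxeter_matrix_sym: "coxeter_matrix S M \<Longrightarrow> s \<in> S \<Longrightarrow> t \<in> S \<Longrightarrow> M s t = M t s"
  unfolding coxeter_matrix_def by (cases "s = t") auto

lemma artin_rel_words: "artin_rel M S u v \<Longrightarrow> u \<in> words S \<and> v \<in> words S"
  by (induction rule: artin_rel.induct) (auto simp: alt_word_in_words)

lemma artin_rel_append_left: "artin_rel M S u v \<Longrightarrow> w \<in> words S \<Longrightarrow> artin_rel M S (w @ u) (w @ v)"
proof (induction rule: artin_rel.induct)
  case (refl w')
  then show ?case by (intro artin_rel.refl) auto
next
  case (sym u v)
  then show ?case by (blast intro: artin_rel.sym)
next
  case (trans u v w')
  then show ?case by (blast intro: artin_rel.trans)
next
  case (cancel u v s b)
  then show ?case using artin_rel.cancel[of "w @ u" S v s M b] by simp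
next
  case (braid u v s t m)
  then show ?case using artin_rel.braid[of "w @ u" S v s t M m] by simp
qed

lemma artin_rel_append_right: "artin_rel M S u v \<Longrightarrow> w \<in> words S \<Longrightarrow> artin_rel M S (u @ w) (v @ w)"
proof (induction rule: artin_rel.induct)
  case (refl w')
  then show ?case by (intro artin_rel.refl) auto
next
  case (sym u v)
  then show ?case by (blast intro: artin_rel.sym)
next
  case (trans u v w')
  then show ?case by (blast intro: artin_rel.trans)
next
  case (cancel u v s b)
  then show ?case using artin_rel.cancel[of u S "v @ w" s M b] by simp
next
  case (braid u v s t m)
  then show ?case using artin_rel.braid[of u S "v @ w" s t M m] by simp
qed

lemma artin_rel_append: "artin_rel M S a a' \<Longrightarrow> artin_rel M S b b' \<Longrightarrow> artin_rel M S (a @ b) (a' @ b')"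
  by (meson artin_rel.trans artin_rel_append_left artin_rel_append_right artin_rel_words)

lemma artin_rel_braid_word:
  "s \<in> S \<Longrightarrow> t \<in> S \<Longrightarrow> s \<noteq> t \<Longrightarrow> M s t = enat m \<Longrightarrow>
   artin_rel M S (alt_word s t m) (alt_word t s m)"
  using artin_rel.braid[of "[]" S "[]" s t M m] by simp

lemma artin_rel_braid_word_mult:
  assumes cox: "coxeter_matrix S M" and "s \<in> S" "t \<in> S" "s \<noteq> t" and st: "M s t = enat k"
  shows "artin_rel M S (alt_word s t (k * j)) (alt_word t s (k * j))"
proof (induction j)
  case 0
  then show ?case by (simp add: artin_rel.refl)
next
  case (Suc j)
  have split: "k * Suc j = k * j + k" by simp
  have "M t s = enat k" using st coxeter_matrix_sym[OF cox, of t s] assms by simp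
  then have "artin_rel M S (alt_word s t k) (alt_word t s k)"
    and "artin_rel M S (alt_word t s k) (alt_word s t k)"
    using artin_rel_braid_word[of s S t M k] artin_rel_braid_word[of t S s M k] assms by simp_all
  then show ?case
    unfolding split alt_word_add using artin_rel_append[OF Suc] by simp
qed

definition artin_class ::
  "('a \<Rightarrow> 'a \<Rightarrow> enat) \<Rightarrow> 'a set \<Rightarrow> ('a \<times> bool) list \<Rightarrow> ('a \<times> bool) list set" where
  "artin_class M S u = {w. artin_rel M S u w}"

lemma artin_class_eq: "artin_rel M S u v \<Longrightarrow> artin_class M S u = artin_class M S v"
  unfolding artin_class_def by (blast intro: artin_rel.trans artin_rel.sym)

lemma carrier_artin_group: "carrier (artin_group M S) = artin_class M S ` words S"
  unfolding artin_group_def artin_class_def by auto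

lemma one_artin_group: "\<one>\<^bsub>artin_group M S\<^esub> = artin_class M S []"
  unfolding artin_group_def artin_class_def by auto

lemma mult_artin_group: "u \<in> words S \<Longrightarrow> v \<in> words S \<Longrightarrow>
   artin_class M S u \<otimes>\<^bsub>artin_group M S\<^esub> artin_class M S v = artin_class M S (u @ v)"
  unfolding artin_group_def artin_class_def
  by (auto intro: artin_rel.refl artin_rel.trans artin_rel_append)

lemma artin_gen_eq_class: "artin_gen M S s = artin_class M S [(s, False)]"
  by (simp add: artin_gen_def artin_class_def)

definition inv_word :: "('a \<times> bool) list \<Rightarrow> ('a \<times> bool) list" where
  "inv_word u = rev (map (\<lambda>(s, b). (s, \<not> b)) u)"

lemma inv_word_in_words: "u \<in> words S \<Longrightarrow> inv_word u \<in> words S"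
  by (auto simp: inv_word_def)

lemma artin_rel_inv_word_append: "u \<in> words S \<Longrightarrow> artin_rel M S (inv_word u @ u) []"
proof (induction u)
  case Nil
  then show ?case by (simp add: inv_word_def artin_rel.refl)
next
  case (Cons a u)
  obtain s b where a: "a = (s, b)" by force
  have s: "s \<in> S" and u: "u \<in> words S" using Cons.prems a by auto
  have "artin_rel M S (inv_word u @ [(s, \<not> b), (s, \<not> \<not> b)] @ u) (inv_word u @ u)"
    by (rule artin_rel.cancel) (auto simp: s u inv_word_in_words)
  moreover have "inv_word (a # u) @ a # u = inv_word u @ [(s, \<not> b), (s, \<not> \<not> b)] @ u"
    by (simp add: inv_word_def a)
  ultimately show ?case using Cons.IH u by (metis artin_rel.trans)
qed

lemma group_artin_group: "group (artin_group M S)"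
proof (rule groupI)
  fix g h assume "g \<in> carrier (artin_group M S)" "h \<in> carrier (artin_group M S)"
  then obtain u v where "u \<in> words S" "v \<in> words S" "g = artin_class M S u" "h = artin_class M S v"
    by (auto simp: carrier_artin_group)
  then show "g \<otimes>\<^bsub>artin_group M S\<^esub> h \<in> carrier (artin_group M S)"
    by (simp add: carrier_artin_group mult_artin_group del: in_listsD)
next
  show "\<one>\<^bsub>artin_group M S\<^esub> \<in> carrier (artin_group M S)"
    by (auto simp: carrier_artin_group one_artin_group)
next
  fix g h k assume "g \<in> carrier (artin_group M S)" "h \<in> carrier (artin_group M S)"
    "k \<in> carrier (artin_group M S)"
  then obtain u v w where "u \<in> words S" "v \<in> words S" "w \<in> words S"
    "g = artin_class M S u" "h = artin_class M S v" "k = artin_class M S w"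
    by (auto simp: carrier_artin_group)
  then show "g \<otimes>\<^bsub>artin_group M S\<^esub> h \<otimes>\<^bsub>artin_group M S\<^esub> k =
      g \<otimes>\<^bsub>artin_group M S\<^esub> (h \<otimes>\<^bsub>artin_group M S\<^esub> k)"
    by (simp add: mult_artin_group del: in_listsD)
next
  fix g assume "g \<in> carrier (artin_group M S)"
  then obtain u where "u \<in> words S" "g = artin_class M S u" by (auto simp: carrier_artin_group)
  then show "\<one>\<^bsub>artin_group M S\<^esub> \<otimes>\<^bsub>artin_group M S\<^esub> g = g"
    using mult_artin_group[of "[]" S u M] by (simp add: one_artin_group)
next
  fix g assume "g \<in> carrier (artin_group M S)"
  then obtain u where u: "u \<in> words S" "g = artin_class M S u" by (auto simp: carrier_artin_group)
  have "artin_class M S (inv_word u) \<in> carrier (artin_group M S)"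
    using inv_word_in_words[OF u(1)] by (simp add: carrier_artin_group)
  moreover have "artin_class M S (inv_word u) \<otimes>\<^bsub>artin_group M S\<^esub> g = \<one>\<^bsub>artin_group M S\<^esub>"
    using u inv_word_in_words[OF u(1)] artin_rel_inv_word_append[OF u(1), of M]
    by (simp add: mult_artin_group one_artin_group artin_class_eq del: in_listsD)
  ultimately show "\<exists>h\<in>carrier (artin_group M S). h \<otimes>\<^bsub>artin_group M S\<^esub> g = \<one>\<^bsub>artin_group M S\<^esub>"
    by blast
qed

lemma inv_artin_class_gen:
  assumes s: "s \<in> S"
  shows "inv\<^bsub>artin_group M S\<^esub> (artin_class M S [(s, False)]) = artin_class M S [(s, True)]"
proof -
  interpret G: group "artin_group M S" by (rule group_artin_group)
  have "artin_rel M S ([] @ [(s, True), (s, \<not> True)] @ []) ([] @ [])"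
    by (rule artin_rel.cancel) (auto simp: s)
  then have "artin_class M S [(s, True)] \<otimes>\<^bsub>artin_group M S\<^esub> artin_class M S [(s, False)] =
      \<one>\<^bsub>artin_group M S\<^esub>"
    using s by (simp add: mult_artin_group one_artin_group artin_class_eq)
  moreover have "artin_class M S [(s, b)] \<in> carrier (artin_group M S)" for b
    using s unfolding carrier_artin_group by auto
  ultimately show ?thesis by (intro G.inv_equality)
qed

lemma artin_parabolic_eq:
  assumes "X \<subseteq> S"
  shows "artin_parabolic M S X = artin_class M S ` words X"
proof
  have XS: "words X \<subseteq> words S" using assms by (intro lists_mono) blast
  show "artin_parabolic M S X \<subseteq> artin_class M S ` words X"
  proof
    fix g assume "g \<in> artin_parabolic M S X"
    then show "g \<in> artin_class M S ` words X"
      unfolding artin_parabolic_def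
    proof (induction rule: generate.induct)
      case one
      have "[] \<in> words X" by simp
      then show ?case unfolding one_artin_group by blast
    next
      case (incl h)
      then obtain s where "s \<in> X" "h = artin_class M S [(s, False)]"
        by (auto simp: artin_gen_eq_class)
      then show ?case by force
    next
      case (inv h)
      then obtain s where s: "s \<in> X" "h = artin_class M S [(s, False)]"
        by (auto simp: artin_gen_eq_class)
      then have "inv\<^bsub>artin_group M S\<^esub> h = artin_class M S [(s, True)]"
        using inv_artin_class_gen[of s S M] assms by auto
      then show ?case using s by force
    next
      case (eng h1 h2)
      then obtain u v where uv: "u \<in> words X" "v \<in> words X"
        "h1 = artin_class M S u" "h2 = artin_class M S v" by auto
      then have "h1 \<otimes>\<^bsub>artin_group M S\<^esub> h2 = artin_class M S (u @ v)"
        using mult_artin_group[of u S v M] XS by blast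
      then show ?case using uv by force
    qed
  qed
  have "u \<in> words X \<Longrightarrow> artin_class M S u \<in> artin_parabolic M S X" for u
  proof (induction u)
    case Nil
    then show ?case
      using generate.one[of "artin_group M S"] by (simp add: artin_parabolic_def one_artin_group)
  next
    case (Cons a u)
    obtain s b where a: "a = (s, b)" by force
    have sX: "s \<in> X" "u \<in> words X" using Cons.prems a by auto
    have sS: "s \<in> S" "u \<in> words S" using sX assms XS by auto
    have g: "artin_class M S [(s, False)] \<in> artin_gen M S ` X" using sX by (simp add: artin_gen_eq_class)
    have "artin_class M S [a] \<in> artin_parabolic M S X"
      using generate.inv[OF g, of "artin_group M S"] generate.incl[OF g, of "artin_group M S"]
        inv_artin_class_gen[of s S M] sS
      by (cases b) (simp_all add: artin_parabolic_def a)
    then have "artin_class M S [a] \<otimes>\<^bsub>artin_group M S\<^esub> artin_class M S u \<in> artin_parabolic M S X"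
      using Cons.IH[OF sX(2)] unfolding artin_parabolic_def by (rule generate.eng)
    then show ?case using mult_artin_group[of "[a]" S u M] sS a by simp
  qed
  then show "artin_class M S ` words X \<subseteq> artin_parabolic M S X" by blast
qed

section \<open>Retractions induced by substituting a generator\<close>

definition word_subst ::
  "'a \<Rightarrow> (bool \<Rightarrow> ('a \<times> bool) list) \<Rightarrow> ('a \<times> bool) list \<Rightarrow> ('a \<times> bool) list" where
  "word_subst x r u = concat (map (\<lambda>(s, b). if s = x then r b else [(s, b)]) u)"

lemma word_subst_Nil [simp]: "word_subst x r [] = []"
  by (simp add: word_subst_def)

lemma word_subst_Cons [simp]:
  "word_subst x r ((s, b) # u) = (if s = x then r b else [(s, b)]) @ word_subst x r u"
  by (simp add: word_subst_def)

lemma word_subst_append [simp]: "word_subst x r (u @ v) = word_subst x r u @ word_subst x r v"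
  by (simp add: word_subst_def)

lemma word_subst_in_words:
  assumes "u \<in> words S" "S - {x} \<subseteq> X" "\<And>b. r b \<in> words X"
  shows "word_subst x r u \<in> words X"
  using assms(1)
proof (induction u)
  case (Cons a u)
  obtain s b where "a = (s, b)" by force
  then show ?case using Cons assms(2,3) by auto
qed simp

lemma word_subst_id: "x \<notin> fst ` set u \<Longrightarrow> word_subst x r u = u"
  by (induction u) auto

lemma word_subst_alt_word_id: "s \<noteq> x \<Longrightarrow> t \<noteq> x \<Longrightarrow> word_subst x r (alt_word s t m) = alt_word s t m"
  by (rule word_subst_id) (auto simp: alt_word_def split: if_splits)

lemma word_subst_alt_word_rename:
  assumes "t \<noteq> x"
  shows "word_subst x (\<lambda>b. [(y, b)]) (alt_word x t m) = alt_word y t m"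
    and "word_subst x (\<lambda>b. [(y, b)]) (alt_word t x m) = alt_word t y m"
  using assms by (induction m) (auto simp: alt_word_Suc)

lemma word_subst_alt_word_delete_even:
  assumes "t \<noteq> x"
  shows "word_subst x (\<lambda>b. []) (alt_word x t (2 * j)) = word_subst x (\<lambda>b. []) (alt_word t x (2 * j))"
proof (induction j)
  case (Suc j)
  have "alt_word s t' 2 = [(s, False), (t', False)]" for s t' :: 'a
    by (simp add: numeral_2_eq_2 alt_word_Suc)
  then show ?case
    using Suc assms unfolding mult_Suc_right add.commute[of 2] alt_word_add by simp
qed simp

definition artin_subst ::
  "('a \<Rightarrow> 'a \<Rightarrow> enat) \<Rightarrow> 'a set \<Rightarrow> 'a \<Rightarrow> (bool \<Rightarrow> ('a \<times> bool) list) \<Rightarrow>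
   ('a \<times> bool) list set \<Rightarrow> ('a \<times> bool) list set" where
  "artin_subst M S x r A = {w. \<exists>u\<in>A. artin_rel M S (word_subst x r u) w}"

context
  fixes M :: "'a \<Rightarrow> 'a \<Rightarrow> enat" and S :: "'a set"
    and x :: 'a and r :: "bool \<Rightarrow> ('a \<times> bool) list"
  assumes cox: "coxeter_matrix S M"
    and r_words: "\<And>b. r b \<in> words (S - {x})"
    and r_cancel: "\<And>b. artin_rel M S (r b @ r (\<not> b)) []"
    and r_braid: "\<And>t m. t \<in> S \<Longrightarrow> t \<noteq> x \<Longrightarrow> M x t = enat m \<Longrightarrow>
      artin_rel M S (word_subst x r (alt_word x t m)) (word_subst x r (alt_word t x m))"
begin

lemma word_subst_in_words_self: "u \<in> words S \<Longrightarrow> word_subst x r u \<in> words S"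
  by (rule word_subst_in_words) (use r_words in auto)

lemma artin_rel_word_subst:
  "artin_rel M S u v \<Longrightarrow> artin_rel M S (word_subst x r u) (word_subst x r v)"
proof (induction rule: artin_rel.induct)
  case (refl w)
  then show ?case by (intro artin_rel.refl word_subst_in_words_self)
next
  case (sym u v)
  show ?case using sym.IH by (rule artin_rel.sym)
next
  case (trans u v w)
  show ?case using trans.IH by (rule artin_rel.trans)
next
  case (cancel u v s b)
  note u = artin_rel.refl[OF word_subst_in_words_self[OF cancel(1)]]
    and v = artin_rel.refl[OF word_subst_in_words_self[OF cancel(2)]]
  show ?case
  proof (cases "s = x")
    case True
    then show ?thesis using artin_rel_append[OF u artin_rel_append[OF r_cancel v]] by simp
  next
    case False
    then show ?thesis
      using artin_rel.cancel[OF cancel(1,2)[THEN word_subst_in_words_self] cancel(3), of M b] by simp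
  qed
next
  case (braid u v s t m)
  note u = artin_rel.refl[OF word_subst_in_words_self[OF braid(1)]]
    and v = artin_rel.refl[OF word_subst_in_words_self[OF braid(2)]]
  have "artin_rel M S (word_subst x r (alt_word s t m)) (word_subst x r (alt_word t s m))"
  proof -
    consider "s = x" | "t = x" | "s \<noteq> x" "t \<noteq> x" by blast
    then show ?thesis
    proof cases
      case 1
      then show ?thesis using r_braid[of t m] braid by simp
    next
      case 2
      have "M x s = enat m" using braid 2 coxeter_matrix_sym[OF cox, of s t] by simp
      then show ?thesis using r_braid[of s m] braid 2 by (simp add: artin_rel.sym)
    next
      case 3
      then show ?thesis using artin_rel_braid_word[of s S t M m] braid by (simp add: word_subst_alt_word_id)
    qed
  qed
  then show ?case using artin_rel_append[OF u artin_rel_append[OF _ v]] by simp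
qed

lemma artin_subst_class:
  assumes "u \<in> words S"
  shows "artin_subst M S x r (artin_class M S u) = artin_class M S (word_subst x r u)"
  using assms artin_rel_word_subst
  unfolding artin_subst_def artin_class_def by (blast intro: artin_rel.refl artin_rel.trans)

lemma ordinary_retraction_artin_subst:
  assumes xS: "x \<in> S" and r_gen: "r False = [] \<or> (\<exists>y\<in>S - {x}. r False = [(y, False)])"
  shows "ordinary_retraction M S (S - {x}) (artin_subst M S x r)"
proof -
  let ?G = "artin_group M S" and ?\<phi> = "artin_subst M S x r"
  have par: "artin_parabolic M S (S - {x}) = artin_class M S ` words (S - {x})"
    by (rule artin_parabolic_eq) blast
  have XS: "words (S - {x}) \<subseteq> words S" by (intro lists_mono) blast
  have "?\<phi> \<in> hom ?G (?G\<lparr>carrier := artin_parabolic M S (S - {x})\<rparr>)"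
  proof (rule homI)
    fix A assume "A \<in> carrier ?G"
    then obtain u where u: "u \<in> words S" "A = artin_class M S u" by (auto simp: carrier_artin_group)
    have "word_subst x r u \<in> words (S - {x})" by (rule word_subst_in_words[OF u(1) _ r_words]) blast
    then show "?\<phi> A \<in> carrier (?G\<lparr>carrier := artin_parabolic M S (S - {x})\<rparr>)"
      using u artin_subst_class par by simp
  next
    fix A B assume "A \<in> carrier ?G" "B \<in> carrier ?G"
    then obtain u v where uv: "u \<in> words S" "A = artin_class M S u" "v \<in> words S" "B = artin_class M S v"
      by (auto simp: carrier_artin_group)
    moreover have "u @ v \<in> words S" using uv by simp
    ultimately show "?\<phi> (A \<otimes>\<^bsub>?G\<^esub> B) = ?\<phi> A \<otimes>\<^bsub>?G\<lparr>carrier := artin_parabolic M S (S - {x})\<rparr>\<^esub> ?\<phi> B"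
      using word_subst_in_words_self
      by (simp add: mult_artin_group artin_subst_class del: in_listsD append_in_lists_conv)
  qed
  moreover have "?\<phi> g = g" if g: "g \<in> artin_parabolic M S (S - {x})" for g
  proof -
    obtain u where u: "u \<in> words (S - {x})" "g = artin_class M S u" using g par by auto
    then have "word_subst x r u = u" by (intro word_subst_id) auto
    moreover have "u \<in> words S" using u(1) XS by blast
    ultimately show ?thesis using u(2) artin_subst_class by simp
  qed
  moreover have "?\<phi> (artin_gen M S s) = artin_class M S (word_subst x r [(s, False)])" if "s \<in> S" for s
    using that by (simp add: artin_gen_eq_class artin_subst_class del: word_subst_Cons)
  ultimately show ?thesis
    using xS r_gen unfolding ordinary_retraction_def
    by (auto simp: artin_gen_eq_class one_artin_group)
qed

end

lemma ordinary_retraction_delete: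
  assumes cox: "coxeter_matrix S M" and xS: "x \<in> S"
    and even: "\<And>t m. t \<in> S - {x} \<Longrightarrow> M x t = enat m \<Longrightarrow> even m"
  shows "ordinary_retraction M S (S - {x}) (artin_subst M S x (\<lambda>b. []))"
proof (rule ordinary_retraction_artin_subst[OF cox _ _ _ xS])
  fix t m assume t: "t \<in> S" "t \<noteq> x" "M x t = enat m"
  then obtain j where "m = 2 * j" using even by blast
  moreover have "word_subst x (\<lambda>b. []) (alt_word x t m) \<in> words S"
    by (rule word_subst_in_words[of _ S _ S]) (auto simp: alt_word_in_words xS t)
  ultimately show "artin_rel M S (word_subst x (\<lambda>b. []) (alt_word x t m))
      (word_subst x (\<lambda>b. []) (alt_word t x m))"
    using word_subst_alt_word_delete_even[OF t(2)] by (simp add: artin_rel.refl)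
qed (auto intro: artin_rel.refl)

lemma ordinary_retraction_rename:
  assumes cox: "coxeter_matrix S M" and xS: "x \<in> S" and y: "y \<in> S - {x}"
    and dvd: "\<And>t m. t \<in> S - {x, y} \<Longrightarrow> M x t = enat m \<Longrightarrow> \<exists>k. M y t = enat k \<and> k dvd m"
  shows "ordinary_retraction M S (S - {x}) (artin_subst M S x (\<lambda>b. [(y, b)]))"
proof (rule ordinary_retraction_artin_subst[OF cox _ _ _ xS])
  fix t m assume t: "t \<in> S" "t \<noteq> x" "M x t = enat m"
  have "artin_rel M S (alt_word y t m) (alt_word t y m)"
  proof (cases "t = y")
    case True
    then show ?thesis using y by (simp add: artin_rel.refl alt_word_in_words)
  next
    case False
    then obtain k j where "M y t = enat k" "m = k * j" using dvd t by blast
    then show ?thesis using artin_rel_braid_word_mult[OF cox, of y t] y t False by auto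
  qed
  then show "artin_rel M S (word_subst x (\<lambda>b. [(y, b)]) (alt_word x t m))
      (word_subst x (\<lambda>b. [(y, b)]) (alt_word t x m))"
    by (simp add: word_subst_alt_word_rename t(2))
next
  show "artin_rel M S ([(y, b)] @ [(y, \<not> b)]) []" for b
    using artin_rel.cancel[of "[]" S "[]" y M b] y by simp
qed (use y in auto)

section \<open>Choosing the substitution\<close>

lemma retract_compatible_dvd_of_le:
  assumes rc: "retract_compatible T M"
    and sym: "\<And>a b. a \<in> T \<Longrightarrow> b \<in> T \<Longrightarrow> M a b = M b a"
    and T: "x \<in> T" "y \<in> T" "t \<in> T" and distinct: "x \<noteq> y" "x \<noteq> t" "y \<noteq> t"
    and xy: "M x y = enat a" and xt: "M x t = enat c" and le: "a \<le> c"
  shows "\<exists>k. M y t = enat k \<and> k dvd c"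
proof -
  obtain b where yt: "M y t = enat b" using rc T unfolding retract_compatible_def by blast
  have "odd a" using rc T xy unfolding retract_compatible_def by force
  have "let P = (\<lambda>a b c. M a b = M a c \<and> (\<exists>n k. M a b = enat n \<and> M b c = enat k \<and> k dvd n))
    in P x y t \<or> P y x t \<or> P t x y"
    using rc T distinct unfolding retract_compatible_def by blast
  then have "(a = c \<and> b dvd a) \<or> (a = b \<and> c dvd a) \<or> (c = b \<and> a dvd c)"
    using xy xt yt sym[of y x] sym[of t x] sym[of t y] T unfolding Let_def by auto
  then have "b dvd c"
  proof (elim disjE conjE)
    assume "a = b" "c dvd a"
    moreover have "a > 0" using \<open>odd a\<close> by (cases a) auto
    ultimately show "b dvd c" using le dvd_imp_le[of c a] by simp
  qed auto
  then show ?thesis using yt by blast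
qed

lemma parabolic_retract_compatible_block:
  assumes "parabolic_retract_compatible S M" and "x \<in> S"
  obtains T where "x \<in> T" "T \<subseteq> S" "retract_compatible T M"
    and "\<And>t. t \<in> S - T \<Longrightarrow> \<exists>n. (n = \<infinity> \<or> (\<exists>k. n = enat k \<and> even k)) \<and> (\<forall>b\<in>T. M b t = n)"
proof -
  obtain P where P: "\<Union>P = S" "\<forall>T\<in>P. retract_compatible T M"
    "\<forall>T\<in>P. \<forall>T'\<in>P. T \<noteq> T' \<longrightarrow>
       (\<exists>n. (n = \<infinity> \<or> (\<exists>k. n = enat k \<and> even k)) \<and> (\<forall>a\<in>T. \<forall>b\<in>T'. M a b = n))"
    using assms(1) unfolding parabolic_retract_compatible_def by (elim exE conjE) (rule that)
  obtain T where T: "T \<in> P" "x \<in> T" using P(1) assms(2) by blast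
  have block: "\<exists>n. (n = \<infinity> \<or> (\<exists>k. n = enat k \<and> even k)) \<and> (\<forall>b\<in>T. M b t = n)"
    if t: "t \<in> S - T" for t
  proof -
    obtain T' where T': "T' \<in> P" "t \<in> T'" using P(1) t by blast
    then have "T \<noteq> T'" using t by blast
    then obtain n where "n = \<infinity> \<or> (\<exists>k. n = enat k \<and> even k)" "\<forall>a\<in>T. \<forall>b\<in>T'. M a b = n"
      using P(3)[rule_format, OF T(1) T'(1)] by blast
    then show ?thesis using T'(2) by blast
  qed
  have "T \<subseteq> S" using P(1) T(1) by blast
  then show ?thesis using that[OF T(2) _ P(2)[rule_format, OF T(1)] block] by blast
qed

lemma parabolic_retract_compatible_delete_or_rename:
  assumes cox: "coxeter_matrix S M" and prc: "parabolic_retract_compatible S M" and xS: "x \<in> S"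
  shows "(\<forall>t\<in>S - {x}. \<forall>m. M x t = enat m \<longrightarrow> even m) \<or>
    (\<exists>y\<in>S - {x}. \<forall>t\<in>S - {x, y}. \<forall>m. M x t = enat m \<longrightarrow> (\<exists>k. M y t = enat k \<and> k dvd m))"
proof -
  obtain T where T: "x \<in> T" "T \<subseteq> S" "retract_compatible T M"
    and block: "\<And>t. t \<in> S - T \<Longrightarrow> \<exists>n. (n = \<infinity> \<or> (\<exists>k. n = enat k \<and> even k)) \<and> (\<forall>b\<in>T. M b t = n)"
    using parabolic_retract_compatible_block[OF prc xS] by blast
  show ?thesis
  proof (cases "T = {x}")
    case True
    then have "\<forall>t\<in>S - {x}. \<forall>m. M x t = enat m \<longrightarrow> even m" using block T(1) by fastforce
    then show ?thesis ..
  next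
    case False
    have "finite (T - {x})" using cox T(2) finite_subset unfolding coxeter_matrix_def by blast
    moreover have "T - {x} \<noteq> {}" using False T(1) by blast
    ultimately obtain y where y: "y \<in> T - {x}" and y_min: "\<And>z. z \<in> T - {x} \<Longrightarrow> M x y \<le> M x z"
      by (metis obtains_MIN Min_le finite_imageI imageI)
    have finite_x: "\<exists>n. M x z = enat n" if "z \<in> T" for z
      using T(3) T(1) that unfolding retract_compatible_def by blast
    have sym: "M a b = M b a" if "a \<in> T" "b \<in> T" for a b
      using coxeter_matrix_sym[OF cox] that T(2) by blast
    have "\<exists>k. M y t = enat k \<and> k dvd m" if t: "t \<in> S - {x, y}" "M x t = enat m" for t m
    proof (cases "t \<in> T")
      case True
      obtain a where a: "M x y = enat a" using finite_x y by blast
      have "a \<le> m" using y_min[of t] True t a by auto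
      then show ?thesis
        using retract_compatible_dvd_of_le[OF T(3) sym T(1) _ True _ _ _ a t(2)] y t by blast
    next
      case False
      then have "M y t = M x t" using block t y T(1) by (metis Diff_iff insertCI)
      then show ?thesis using t by auto
    qed
    then show ?thesis using y T(2) by blast
  qed
qed

theorem lemma3p10:
  fixes S :: "'a set" and M :: "'a \<Rightarrow> 'a \<Rightarrow> enat"
  assumes "coxeter_matrix S M"
    and "parabolic_retract_compatible S M"
    and "x \<in> S"
  shows "\<exists>\<phi>. ordinary_retraction M S (S - {x}) \<phi>"
  using parabolic_retract_compatible_delete_or_rename[OF assms]
proof
  assume "\<forall>t\<in>S - {x}. \<forall>m. M x t = enat m \<longrightarrow> even m"
  then show ?thesis using ordinary_retraction_delete[OF assms(1,3)] by blast
next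
  assume "\<exists>y\<in>S - {x}. \<forall>t\<in>S - {x, y}. \<forall>m. M x t = enat m \<longrightarrow> (\<exists>k. M y t = enat k \<and> k dvd m)"
  then show ?thesis using ordinary_retraction_rename[OF assms(1,3)] by blast
qed

end
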